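(* Let $A$ be a finite totally ordered alphabet, let $M=\{n_{1},\dots,n_{t}\}$ be a finite multiset of necklaces with $n_{i}=n(u_{i})$ for primitive words $u_{i}$, and let $n=|n_{1}|+\cdots+|n_{t}|$. Let $w=BW(M)\in A^{n}$ and let $S(M)$ be the subsemigroup of $POI_{n}$ generated by the mappings $\pi_{a}$ $(a\in A)$ of the standard permutation $\pi=\pi(w)$. Then $S(M)$ is isomorphic to a subdirect product of the syntactic semigroups $S_{u_{1}},\dots,S_{u_{t}}$.
   Context: Words are compared lexicographically. A word is primitive if it is not a proper power of another word; a necklace is the set of conjugates ($xy\sim yx$) of a primitive word, and its length is the length of its words. $[n]=\{0<1<\cdots<n-1\}$; $POI_{n}$ is the semigroup of all one-to-one, order-preserving partial maps on $[n]$ under composition (maps composed left to right). Burrows–Wheeler map: given a multiset $M$ of necklaces, let $l$ be the lcm of their lengths; form the list of all words $v^{l/|v|}$ where $v$ ranges over the words of each necklace of $M$ (with multiplicity), sorted lexicographically; this is an $n\times l$ table $T(M)$ and $BW(M)$ is its last column read top to bottom. Standard permutation of $w\in A^{n}$: let $f(w)$ be the letters of $w$ rearranged in nondecreasing order; for each letter $a$, $\pi_{a}$ is the unique order-preserving injective partial map on $[n]$ whose domain is the set of positions of $a$ in $f(w)$ and whose range is the set of positions of $a$ in $w$ (positions indexed from $0$; $\pi_a$ is empty if $a$ does not occur in $w$); $\pi(w)=\bigcup_{a}\pi_{a}$. For primitive $u$, $\langle u\rangle=\{u^{m}:m\ge1\}$, $\rho_{u}$ is the syntactic congruence of $\langle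 u\rangle$ on $A^{+}$ ($x\rho_{u}y$ iff for all $p,q\in A^{*}$: $pxq\in\langle u\rangle\Leftrightarrow pyq\in\langle u\rangle$), and $S_{u}=A^{+}/\rho_{u}$. A subdirect product of semigroups $S_{1},\dots,S_{t}$ is a subsemigroup of $S_{1}\times\cdots\times S_{t}$ whose projection onto each factor is surjective. *)

theory Defs
  imports Main "HOL-Library.List_Lexorder"
begin

definition word_pow :: "'a list \<Rightarrow> nat \<Rightarrow> 'a list" where
  "word_pow v k = concat (replicate k v)"

definition primitive :: "'a list \<Rightarrow> bool" where
  "primitive u \<longleftrightarrow> u \<noteq> [] \<and> \<not> (\<exists>v k. k \<ge> 2 \<and> u = word_pow v k)"

definition necklace :: "'a list \<Rightarrow> 'a list set" where
  "necklace u = {v. \<exists>x y. u = x @ y \<and> v = y @ x}"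

definition necklace_words :: "('a::linorder) list \<Rightarrow> 'a list list" where
  "necklace_words u = sorted_list_of_set (necklace u)"

(* the rows of the table T(M) for M = {n(u_1),...,n(u_t)} (with multiplicity),
   sorted lexicographically *)
definition bw_table :: "('a::linorder) list list \<Rightarrow> 'a list list" where
  "bw_table us =
     (let l = Lcm (set (map length us))
      in sort (concat (map (\<lambda>u. map (\<lambda>v. word_pow v (l div length v)) (necklace_words u)) us)))"

definition BW :: "('a::linorder) list list \<Rightarrow> 'a list" where
  "BW us = map last (bw_table us)"

definition positions :: "'a \<Rightarrow> 'a list \<Rightarrow> nat list" where
  "positions a w = filter (\<lambda>i. w ! i = a) [0..<length w]"

definition std_perm_letter :: "('a::linorder) list \<Rightarrow> 'a \<Rightarrow> (nat \<rightharpoonup> nat)" where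
  "std_perm_letter w a = map_of (zip (positions a (sort w)) (positions a w))"

definition POI :: "nat \<Rightarrow> (nat \<rightharpoonup> nat) set" where
  "POI n = {f. dom f \<subseteq> {..<n} \<and> ran f \<subseteq> {..<n} \<and> inj_on f (dom f) \<and>
               (\<forall>i\<in>dom f. \<forall>j\<in>dom f. i < j \<longrightarrow> the (f i) < the (f j))}"

(* composition of partial maps, left to right: x (f g) = (x f) g *)
definition pcomp :: "(nat \<rightharpoonup> nat) \<Rightarrow> (nat \<rightharpoonup> nat) \<Rightarrow> (nat \<rightharpoonup> nat)" where
  "pcomp f g = g \<circ>\<^sub>m f"

inductive_set gen_subsemigroup :: "('b \<Rightarrow> 'b \<Rightarrow> 'b) \<Rightarrow> 'b set \<Rightarrow> 'b set"
  for mult :: "'b \<Rightarrow> 'b \<Rightarrow> 'b" and X :: "'b set" where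
  base: "x \<in> X \<Longrightarrow> x \<in> gen_subsemigroup mult X"
| step: "x \<in> gen_subsemigroup mult X \<Longrightarrow> y \<in> gen_subsemigroup mult X \<Longrightarrow>
         mult x y \<in> gen_subsemigroup mult X"

definition SM :: "('a::{linorder,finite}) list list \<Rightarrow> (nat \<rightharpoonup> nat) set" where
  "SM us = gen_subsemigroup pcomp (range (std_perm_letter (BW us)))"

definition upowers :: "'a list \<Rightarrow> 'a list set" where
  "upowers u = {word_pow u m | m. m \<ge> 1}"

definition synt_cong :: "'a list \<Rightarrow> ('a list \<times> 'a list) set" where
  "synt_cong u = {(x, y). x \<noteq> [] \<and> y \<noteq> [] \<and>
      (\<forall>p q. p @ x @ q \<in> upowers u \<longleftrightarrow> p @ y @ q \<in> upowers u)}"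

definition synt_sg :: "'a list \<Rightarrow> 'a list set set" where
  "synt_sg u = {x. x \<noteq> []} // synt_cong u"

definition synt_mult :: "'a list \<Rightarrow> 'a list set \<Rightarrow> 'a list set \<Rightarrow> 'a list set" where
  "synt_mult u X Y = synt_cong u `` {x @ y | x y. x \<in> X \<and> y \<in> Y}"

definition prod_mult :: "'a list list \<Rightarrow> 'a list set list \<Rightarrow> 'a list set list \<Rightarrow> 'a list set list" where
  "prod_mult us xs ys = map (\<lambda>i. synt_mult (us ! i) (xs ! i) (ys ! i)) [0..<length us]"

definition subdirect_product :: "'a list list \<Rightarrow> 'a list set list set \<Rightarrow> bool" where
  "subdirect_product us T \<longleftrightarrow>
     T \<subseteq> {xs. length xs = length us \<and> (\<forall>i<length us. xs ! i \<in> synt_sg (us ! i))} \<and>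
     (\<forall>x\<in>T. \<forall>y\<in>T. prod_mult us x y \<in> T) \<and>
     (\<forall>i<length us. (\<lambda>xs. xs ! i) ` T = synt_sg (us ! i))"

definition sg_iso :: "'b set \<Rightarrow> ('b \<Rightarrow> 'b \<Rightarrow> 'b) \<Rightarrow> 'c set \<Rightarrow> ('c \<Rightarrow> 'c \<Rightarrow> 'c) \<Rightarrow> bool" where
  "sg_iso S m T m' \<longleftrightarrow> (\<exists>\<phi>. bij_betw \<phi> S T \<and> (\<forall>x\<in>S. \<forall>y\<in>S. \<phi> (m x y) = m' (\<phi> x) (\<phi> y)))"

end

theory Submission
  imports Defs "HOL-Library.Multiset" "HOL-Number_Theory.Cong"
begin

text \<open>The rows of \<open>T(M)\<close> are the words \<open>v\<^bsup>l/|v|\<^esup>\<close> for \<open>v\<close> in the necklaces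
  \<open>n(u\<^sub>i)\<close>; they form a sorted list whose multiset is closed under rotation. For such a table
  \<open>\<pi>\<^sub>a\<close> is the LF-mapping: it sends a row beginning with \<open>a\<close> to its rotation by one letter,
  equal rows being matched by their rank. Hence the map of a nonempty word \<open>x\<close> is defined
  exactly on the rows \<open>r\<close> such that \<open>x\<close> is a prefix of \<open>r\<^sup>\<omega>\<close>, and moves such a row to its
  rotation by \<open>|x|\<close>. As the \<open>u\<^sub>i\<close> are primitive, \<open>x\<close> and \<open>y\<close> therefore act alike iff, for every \<open>i\<close>,
  they occur at the same positions of \<open>u\<^sub>i\<^sup>\<omega>\<close> and have lengths congruent modulo
  \<open>|u\<^sub>i|\<close>, which is exactly \<open>x \<rho>\<^sub>u\<^sub>i y\<close>. So \<open>S(M)\<close> is \<open>A\<^sup>+\<close> modulo the intersection of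
  the \<open>\<rho>\<^sub>u\<^sub>i\<close>, i.e. the subsemigroup of \<open>S\<^sub>u\<^sub>1 \<times> \<dots> \<times> S\<^sub>u\<^sub>t\<close> of tuples of classes of a
  common word.\<close>

section \<open>Powers and primitive words\<close>

lemma word_pow_Suc: "word_pow v (Suc k) = v @ word_pow v k"
  by (simp add: word_pow_def)

lemma length_word_pow [simp]: "length (word_pow v k) = k * length v"
  by (induction k) (auto simp: word_pow_Suc word_pow_def)

lemma nth_word_pow: "j < k * length v \<Longrightarrow> word_pow v k ! j = v ! (j mod length v)"
proof (induction k arbitrary: j)
  case (Suc k)
  show ?case
  proof (cases "j < length v")
    case False
    then have "j - length v < k * length v" using Suc.prems by auto
    then show ?thesis using False Suc.IH by (simp add: word_pow_Suc nth_append le_mod_geq)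
  qed (simp add: word_pow_Suc nth_append)
qed simp

lemma Cons_word_pow_snoc: "b # word_pow (v @ [b]) k = word_pow (b # v) k @ [b]"
  by (induction k) (simp_all add: word_pow_def)

lemma rotate1_word_pow: "rotate1 (word_pow v k) = word_pow (rotate1 v) k"
proof (cases "v = [] \<or> k = 0")
  case False
  then obtain b v' k' where v: "v = b # v'" and k: "k = Suc k'"
    by (metis list.exhaust not0_implies_Suc)
  have "rotate1 (word_pow v k) = v' @ word_pow (b # v') k' @ [b]"
    by (simp add: v k word_pow_Suc)
  also have "\<dots> = word_pow (rotate1 v) k"
    by (simp add: v k word_pow_Suc flip: Cons_word_pow_snoc)
  finally show ?thesis .
qed (auto simp: word_pow_def)

lemma rotate_word_pow: "rotate a (word_pow v k) = word_pow (rotate a v) k"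
  by (induction a) (simp_all add: rotate1_word_pow)

lemma word_pow_eq_imp_eq:
  assumes "k \<ge> 1" "length v = length v'" "word_pow v k = word_pow v' k"
  shows "v = v'"
proof -
  obtain k' where k: "k = Suc k'" using assms(1) by (cases k) auto
  have "v = take (length v) (word_pow v k)" unfolding k word_pow_Suc by simp
  also have "\<dots> = take (length v') (word_pow v' k)" using assms(2,3) by simp
  also have "\<dots> = v'" unfolding k word_pow_Suc by simp
  finally show ?thesis .
qed

lemma primitive_nonempty: "primitive u \<Longrightarrow> u \<noteq> []"
  by (simp add: primitive_def)

lemma cyclic_period_mult:
  assumes "\<And>j. u ! ((j + d) mod m) = u ! (j mod m)"
  shows "u ! ((j + t * d) mod m) = u ! (j mod m)"
proof (induction t)
  case (Suc t)
  have "u ! ((j + Suc t * d) mod m) = u ! ((j + t * d + d) mod m)"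
    by (simp add: algebra_simps)
  then show ?case using assms Suc by simp
qed simp

lemma cyclic_period_gcd:
  assumes per: "\<And>j. u ! ((j + d) mod m) = u ! (j mod m)" and "0 < d"
  shows "u ! ((j + gcd d m) mod m) = u ! (j mod m)"
proof -
  obtain x y where "d * x = m * y + gcd d m" using bezout_nat[of d m] \<open>0 < d\<close> by auto
  then have "(j + x * d) mod m = (j + gcd d m + m * y) mod m" by (simp add: algebra_simps)
  then show ?thesis using cyclic_period_mult[OF per, of j x] by simp
qed

lemma word_pow_take_cyclic_period:
  assumes per: "\<And>j. u ! ((j + g) mod length u) = u ! (j mod length u)"
    and "0 < g" "g dvd length u"
  shows "u = word_pow (take g u) (length u div g)"
proof (rule nth_equalityI)
  fix j assume j: "j < length u"
  have g: "g \<le> length u" using assms j by (auto dest: dvd_imp_le)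
  have "u ! j = u ! ((j mod g + (j div g) * g) mod length u)" using j by simp
  also have "\<dots> = u ! (j mod g)"
    using cyclic_period_mult[OF per] \<open>0 < g\<close> g
    by (metis mod_less mod_less_divisor order.strict_trans2)
  also have "\<dots> = word_pow (take g u) (length u div g) ! j"
    using nth_word_pow[of j "length u div g" "take g u"] j g \<open>0 < g\<close> \<open>g dvd length u\<close> by simp
  finally show "u ! j = word_pow (take g u) (length u div g) ! j" .
next
  show "length u = length (word_pow (take g u) (length u div g))"
    using assms by (cases "length u = 0") (auto simp: min_absorb2 dvd_imp_le)
qed

text \<open>The gcd of a period with the length is a period dividing the length, which would exhibit
  the word as a proper power.\<close>

lemma primitive_not_cyclic_period:
  assumes "primitive u" and "0 < d" "d < length u"
    and per: "\<And>j. u ! ((j + d) mod length u) = u ! (j mod length u)"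
  shows False
proof -
  define g where "g = gcd d (length u)"
  have "0 < g" "g dvd length u" using \<open>0 < d\<close> by (simp_all add: g_def)
  moreover have "g < length u"
  proof -
    have "g \<le> d" unfolding g_def using \<open>0 < d\<close> by (intro gcd_le1_nat) simp
    then show ?thesis using \<open>d < length u\<close> by linarith
  qed
  moreover have "u = word_pow (take g u) (length u div g)"
    by (rule word_pow_take_cyclic_period)
      (use cyclic_period_gcd[OF per] \<open>0 < d\<close> \<open>0 < g\<close> \<open>g dvd length u\<close> in \<open>simp_all add: g_def\<close>)
  moreover have "length u div g \<ge> 2"
  proof -
    obtain q where q: "length u = g * q" using \<open>g dvd length u\<close> by blast
    then have "q \<noteq> 0" "q \<noteq> 1" using \<open>g < length u\<close> by auto
    then show ?thesis using q \<open>0 < g\<close> by simp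
  qed
  ultimately show False using \<open>primitive u\<close> unfolding primitive_def by blast
qed

lemma primitive_rotate_eq_self:
  assumes "primitive u" "rotate d u = u"
  shows "d mod length u = 0"
proof (rule ccontr)
  assume "d mod length u \<noteq> 0"
  moreover have "u ! ((j + d mod length u) mod length u) = u ! (j mod length u)" for j
  proof -
    have "u ! (j mod length u) = rotate (d mod length u) u ! (j mod length u)"
      using assms(2) by (metis rotate_conv_mod)
    also have "\<dots> = u ! ((j + d mod length u) mod length u)"
      using primitive_nonempty[OF assms(1)]
      by (simp add: nth_rotate) (metis add.commute mod_add_left_eq mod_add_right_eq)
    finally show ?thesis by simp
  qed
  ultimately show False
    using primitive_not_cyclic_period[OF assms(1), of "d mod length u"]
      primitive_nonempty[OF assms(1)] by simp
qed

lemma primitive_rotate_eq_iff: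
  assumes "primitive u"
  shows "rotate a u = rotate b u \<longleftrightarrow> a mod length u = b mod length u"
proof
  define m where "m = length u"
  have "m > 0" using primitive_nonempty[OF assms] by (simp add: m_def)
  have one_sided: "a mod m = b mod m" if eq: "rotate a u = rotate b u" and le: "a mod m \<le> b mod m"
    for a b
  proof -
    have "rotate (m - b mod m + a mod m) u = rotate (m - b mod m) (rotate (a mod m) u)"
      by (simp add: rotate_rotate)
    also have "\<dots> = rotate (m - b mod m) (rotate (b mod m) u)"
      using eq by (metis m_def rotate_conv_mod)
    also have "\<dots> = u"
      using \<open>m > 0\<close> by (simp add: rotate_rotate m_def less_imp_le)
    finally have "(m - b mod m + a mod m) mod m = 0"
      unfolding m_def by (rule primitive_rotate_eq_self[OF assms])
    moreover have "0 < m - b mod m + a mod m" "m - b mod m + a mod m \<le> m"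
      using mod_less_divisor[OF \<open>m > 0\<close>, of b] le by linarith+
    ultimately have "m - b mod m + a mod m = m"
      by (metis le_neq_implies_less mod_less neq0_conv)
    then show ?thesis using \<open>m > 0\<close> le by (simp add: less_imp_le)
  qed
  assume "rotate a u = rotate b u"
  then show "a mod length u = b mod length u"
    using one_sided[of a b] one_sided[of b a] unfolding m_def by (metis nat_le_linear)
qed (metis rotate_conv_mod)

section \<open>Cyclic factors and the syntactic congruence of \<open>u\<^sup>+\<close>\<close>

definition cyclic_factor_at :: "'a list \<Rightarrow> nat \<Rightarrow> 'a list \<Rightarrow> bool" where
  "cyclic_factor_at u c x \<longleftrightarrow> (\<forall>i<length x. x ! i = u ! ((c + i) mod length u))"

lemma cyclic_factor_at_Nil [simp]: "cyclic_factor_at u c []"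
  by (simp add: cyclic_factor_at_def)

lemma cyclic_factor_at_append:
  "cyclic_factor_at u c (xs @ ys) \<longleftrightarrow>
     cyclic_factor_at u c xs \<and> cyclic_factor_at u (c + length xs) ys"
  unfolding cyclic_factor_at_def
proof safe
  fix i assume "\<forall>i<length (xs @ ys). (xs @ ys) ! i = u ! ((c + i) mod length u)"
  then show "i < length xs \<Longrightarrow> xs ! i = u ! ((c + i) mod length u)"
    and "i < length ys \<Longrightarrow> ys ! i = u ! ((c + length xs + i) mod length u)"
    by (auto simp: nth_append add.assoc dest: spec[of _ i] spec[of _ "length xs + i"])
next
  fix i assume "\<forall>i<length xs. xs ! i = u ! ((c + i) mod length u)"
    and "\<forall>i<length ys. ys ! i = u ! ((c + length xs + i) mod length u)"
    and "i < length (xs @ ys)"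
  then show "(xs @ ys) ! i = u ! ((c + i) mod length u)"
    by (cases "i < length xs") (auto simp: nth_append)
qed

lemma cyclic_factor_at_Cons:
  "cyclic_factor_at u c (a # x) \<longleftrightarrow> u ! (c mod length u) = a \<and> cyclic_factor_at u (Suc c) x"
  using cyclic_factor_at_append[of u c "[a]" x] by (auto simp: cyclic_factor_at_def)

lemma cyclic_factor_at_mod: "cyclic_factor_at u (c mod length u) x = cyclic_factor_at u c x"
  by (simp add: cyclic_factor_at_def mod_add_left_eq)

lemma cyclic_factor_at_rotate1:
  "r \<noteq> [] \<Longrightarrow> cyclic_factor_at (rotate1 r) c x = cyclic_factor_at r (Suc c) x"
  by (simp add: cyclic_factor_at_def nth_rotate1 mod_Suc_eq)

lemma cyclic_factor_at_rotate:
  "u \<noteq> [] \<Longrightarrow> cyclic_factor_at (rotate c u) 0 x = cyclic_factor_at u c x"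
  by (simp add: cyclic_factor_at_def nth_rotate mod_add_right_eq)

lemma cyclic_factor_at_word_pow:
  assumes "v \<noteq> []" "k \<ge> 1"
  shows "cyclic_factor_at (word_pow v k) 0 x = cyclic_factor_at v 0 x"
proof -
  have "word_pow v k ! (i mod (k * length v)) = v ! (i mod length v)" for i
    using assms by (simp add: nth_word_pow mod_mod_cancel)
  then show ?thesis by (simp add: cyclic_factor_at_def)
qed

lemma upowers_iff:
  assumes "u \<noteq> []"
  shows "z \<in> upowers u \<longleftrightarrow> z \<noteq> [] \<and> length z mod length u = 0 \<and> cyclic_factor_at u 0 z"
proof
  assume "z \<in> upowers u"
  then obtain k where k: "k \<ge> 1" "z = word_pow u k" by (auto simp: upowers_def)
  moreover from k have len: "length z = k * length u" by simp
  moreover from len k(1) assms have "z \<noteq> []" by (intro notI) simp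
  ultimately show "z \<noteq> [] \<and> length z mod length u = 0 \<and> cyclic_factor_at u 0 z"
    using assms by (auto simp: cyclic_factor_at_def nth_word_pow)
next
  assume z: "z \<noteq> [] \<and> length z mod length u = 0 \<and> cyclic_factor_at u 0 z"
  define k where "k = length z div length u"
  have len: "length z = k * length u" using z by (auto simp: k_def)
  then have "k \<ge> 1" using z by (cases k) auto
  moreover have "z = word_pow u k"
    by (rule nth_equalityI) (use len z in \<open>auto simp: nth_word_pow cyclic_factor_at_def\<close>)
  ultimately show "z \<in> upowers u" by (auto simp: upowers_def)
qed

lemma append3_in_upowers_iff:
  assumes "u \<noteq> []" "x \<noteq> []"
  shows "p @ x @ q \<in> upowers u \<longleftrightarrow>
    (length p + length x + length q) mod length u = 0 \<and> cyclic_factor_at u 0 p \<and>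
    cyclic_factor_at u (length p) x \<and> cyclic_factor_at u (length p + length x) q"
  using assms by (auto simp: upowers_iff cyclic_factor_at_append add.assoc)

lemma cyclic_factor_at_in_upowers:
  assumes "u \<noteq> []" "x \<noteq> []" "cyclic_factor_at u c x"
  obtains p q where "p @ x @ q \<in> upowers u" "length p = c"
proof -
  define m where "m = length u"
  define p where "p = map (\<lambda>i. u ! (i mod m)) [0..<c]"
  define q where "q = map (\<lambda>i. u ! ((c + length x + i) mod m)) [0..<m - (c + length x) mod m]"
  have "(c + length x + length q) mod m = ((c + length x) mod m + length q) mod m"
    by (simp add: mod_add_left_eq)
  also have "(c + length x) mod m + length q = m"
    using assms(1) by (simp add: q_def m_def less_imp_le)
  finally have "p @ x @ q \<in> upowers u"
    using assms by (simp add: append3_in_upowers_iff p_def q_def m_def cyclic_factor_at_def)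
  moreover have "length p = c" by (simp add: p_def)
  ultimately show thesis by (rule that)
qed

lemma synt_cong_cyclic_factor_at:
  assumes u: "u \<noteq> []" and xy: "(x, y) \<in> synt_cong u" and "cyclic_factor_at u c x"
  shows "cyclic_factor_at u c y \<and> [length x = length y] (mod length u)"
proof -
  have "x \<noteq> []" "y \<noteq> []" using xy by (auto simp: synt_cong_def)
  obtain p q where pq: "p @ x @ q \<in> upowers u" "length p = c"
    using cyclic_factor_at_in_upowers[OF u \<open>x \<noteq> []\<close> \<open>cyclic_factor_at u c x\<close>] .
  then have "p @ y @ q \<in> upowers u" using xy by (auto simp: synt_cong_def)
  then have "[c + length q + length x = c + length q + length y] (mod length u)"
    "cyclic_factor_at u c y"
    using pq u \<open>x \<noteq> []\<close> \<open>y \<noteq> []\<close> by (auto simp: append3_in_upowers_iff cong_def add_ac)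
  then show ?thesis by (simp add: cong_add_lcancel_nat)
qed

lemma append3_in_upowers_transfer:
  assumes u: "u \<noteq> []" and "x \<noteq> []" "y \<noteq> []"
    and read: "\<forall>c. cyclic_factor_at u c x \<longleftrightarrow> cyclic_factor_at u c y"
    and len: "\<forall>c. cyclic_factor_at u c x \<longrightarrow> [length x = length y] (mod length u)"
    and "p @ x @ q \<in> upowers u"
  shows "p @ y @ q \<in> upowers u"
proof -
  have x: "(length p + length x + length q) mod length u = 0" "cyclic_factor_at u 0 p"
    "cyclic_factor_at u (length p) x" "cyclic_factor_at u (length p + length x) q"
    using assms(6) append3_in_upowers_iff[OF u \<open>x \<noteq> []\<close>] by auto
  moreover from len x(3) have "[length x = length y] (mod length u)" by blast
  ultimately have "[length p + length x = length p + length y] (mod length u)"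
    "[length p + length x + length q = length p + length y + length q] (mod length u)"
    by (simp_all add: cong_add)
  moreover have "cyclic_factor_at u (length p + length y) q"
    using x(4) calculation(1) cyclic_factor_at_mod[of u "length p + length y" q]
      cyclic_factor_at_mod[of u "length p + length x" q] by (simp add: cong_def)
  ultimately show ?thesis
    using x read by (simp add: append3_in_upowers_iff[OF u \<open>y \<noteq> []\<close>] cong_def)
qed

lemma synt_cong_iff:
  assumes "u \<noteq> []" "x \<noteq> []" "y \<noteq> []"
  shows "(x, y) \<in> synt_cong u \<longleftrightarrow>
    (\<forall>c. cyclic_factor_at u c x \<longleftrightarrow> cyclic_factor_at u c y) \<and>
    (\<forall>c. cyclic_factor_at u c x \<longrightarrow> length x mod length u = length y mod length u)"
proof
  assume "(x, y) \<in> synt_cong u"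
  moreover from this have "(y, x) \<in> synt_cong u" by (auto simp: synt_cong_def)
  ultimately show "(\<forall>c. cyclic_factor_at u c x \<longleftrightarrow> cyclic_factor_at u c y) \<and>
    (\<forall>c. cyclic_factor_at u c x \<longrightarrow> length x mod length u = length y mod length u)"
    using synt_cong_cyclic_factor_at[OF \<open>u \<noteq> []\<close>] unfolding cong_def by blast
next
  assume "(\<forall>c. cyclic_factor_at u c x \<longleftrightarrow> cyclic_factor_at u c y) \<and>
    (\<forall>c. cyclic_factor_at u c x \<longrightarrow> length x mod length u = length y mod length u)"
  then show "(x, y) \<in> synt_cong u"
    using assms append3_in_upowers_transfer[OF \<open>u \<noteq> []\<close>, of x y]
      append3_in_upowers_transfer[OF \<open>u \<noteq> []\<close>, of y x]
    unfolding synt_cong_def cong_def by auto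
qed

lemma synt_cong_equiv: "equiv {x. x \<noteq> []} (synt_cong u)"
  by (rule equivI) (auto simp: refl_on_def sym_def trans_def synt_cong_def)

lemma synt_cong_append:
  assumes "(x, x') \<in> synt_cong u" "(y, y') \<in> synt_cong u"
  shows "(x @ y, x' @ y') \<in> synt_cong u"
proof -
  have x: "p @ x @ q \<in> upowers u \<longleftrightarrow> p @ x' @ q \<in> upowers u"
    and y: "p @ y @ q \<in> upowers u \<longleftrightarrow> p @ y' @ q \<in> upowers u" for p q
    using assms by (simp_all add: synt_cong_def)
  have "p @ (x @ y) @ q \<in> upowers u \<longleftrightarrow> p @ (x' @ y') @ q \<in> upowers u" for p q
  proof -
    have "p @ (x @ y) @ q \<in> upowers u \<longleftrightarrow> p @ x' @ (y @ q) \<in> upowers u"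
      using x[of p "y @ q"] by simp
    also have "\<dots> \<longleftrightarrow> (p @ x') @ y' @ q \<in> upowers u"
      using y[of "p @ x'" q] by simp
    finally show ?thesis by simp
  qed
  then show ?thesis using assms by (auto simp: synt_cong_def)
qed

lemma synt_mult_classes:
  assumes "x \<noteq> []" "y \<noteq> []"
  shows "synt_mult u (synt_cong u `` {x}) (synt_cong u `` {y}) = synt_cong u `` {x @ y}"
proof -
  have "(x, x) \<in> synt_cong u" "(y, y) \<in> synt_cong u"
    using assms by (auto simp: synt_cong_def)
  moreover have "(x @ y, z) \<in> synt_cong u"
    if "(x, x') \<in> synt_cong u" "(y, y') \<in> synt_cong u" "(x' @ y', z) \<in> synt_cong u" for x' y' z
    using synt_cong_append[OF that(1,2)] that(3) synt_cong_equiv[of u]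
    unfolding equiv_def trans_def by blast
  ultimately show ?thesis unfolding synt_mult_def by blast
qed

definition synt_classes :: "'a list list \<Rightarrow> 'a list \<Rightarrow> 'a list set list" where
  "synt_classes us x = map (\<lambda>u. synt_cong u `` {x}) us"

lemma synt_classes_eq_iff:
  assumes "x \<noteq> []" "y \<noteq> []"
  shows "synt_classes us x = synt_classes us y \<longleftrightarrow> (\<forall>u\<in>set us. (x, y) \<in> synt_cong u)"
  using assms by (simp add: synt_classes_def map_eq_conv eq_equiv_class_iff[OF synt_cong_equiv])

lemma prod_mult_synt_classes:
  assumes "x \<noteq> []" "y \<noteq> []"
  shows "prod_mult us (synt_classes us x) (synt_classes us y) = synt_classes us (x @ y)"
  by (rule nth_equalityI) (simp_all add: prod_mult_def synt_classes_def synt_mult_classes[OF assms])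

lemma subdirect_product_synt_classes:
  "subdirect_product us (synt_classes us ` {x. x \<noteq> []})"
  unfolding subdirect_product_def
proof (intro conjI ballI allI impI)
  show "synt_classes us ` {x. x \<noteq> []} \<subseteq>
      {xs. length xs = length us \<and> (\<forall>i<length us. xs ! i \<in> synt_sg (us ! i))}"
    by (auto simp: synt_classes_def synt_sg_def intro: quotientI)
next
  fix X Y assume "X \<in> synt_classes us ` {x. x \<noteq> []}" "Y \<in> synt_classes us ` {x. x \<noteq> []}"
  then show "prod_mult us X Y \<in> synt_classes us ` {x. x \<noteq> []}"
    using prod_mult_synt_classes by fastforce
next
  fix i assume "i < length us"
  then show "(\<lambda>xs. xs ! i) ` synt_classes us ` {x. x \<noteq> []} = synt_sg (us ! i)"
    by (auto simp: synt_classes_def synt_sg_def image_image intro: quotientI elim!: quotientE)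
qed

section \<open>Order-preserving partial injections\<close>

lemma POI_I:
  assumes "dom f \<subseteq> {..<n}" "ran f \<subseteq> {..<n}"
    and mono: "\<And>i j. i \<in> dom f \<Longrightarrow> j \<in> dom f \<Longrightarrow> i < j \<Longrightarrow> the (f i) < the (f j)"
  shows "f \<in> POI n"
proof -
  have "inj_on f (dom f)"
  proof (rule inj_onI)
    fix i j assume "i \<in> dom f" "j \<in> dom f" "f i = f j"
    then show "i = j" using mono[of i j] mono[of j i] by (cases i j rule: linorder_cases) auto
  qed
  then show ?thesis using assms by (auto simp: POI_def)
qed

lemma map_of_zip_in_POI:
  assumes xs: "sorted_wrt (<) xs" and ys: "sorted_wrt (<) ys" and len: "length xs = length ys"
    and "set xs \<subseteq> {..<n}" "set ys \<subseteq> {..<n}"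
  shows "map_of (zip xs ys) \<in> POI n"
proof (rule POI_I)
  have "distinct xs" using xs strict_sorted_iff by blast
  then show "dom (map_of (zip xs ys)) \<subseteq> {..<n}" "ran (map_of (zip xs ys)) \<subseteq> {..<n}"
    using assms by (simp_all add: ran_map_of_zip)
  fix i j assume "i \<in> dom (map_of (zip xs ys))" "j \<in> dom (map_of (zip xs ys))" "i < j"
  then obtain p q where pq: "p < length xs" "i = xs ! p" "q < length xs" "j = xs ! q"
    using len by (auto simp: in_set_conv_nth)
  have "p < q"
  proof (rule ccontr)
    assume "\<not> p < q"
    then have "xs ! q \<le> xs ! p"
      using sorted_wrt_nth_less[OF xs, of q p] pq by (cases "p = q") auto
    then show False using pq \<open>i < j\<close> by simp
  qed
  then show "the (map_of (zip xs ys) i) < the (map_of (zip xs ys) j)"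
    using pq map_of_zip_nth[OF len \<open>distinct xs\<close>] len sorted_wrt_nth_less[OF ys] by simp
qed

lemma length_positions: "length (positions a w) = count (mset w) a"
proof -
  have "count (mset w) a = length (filter ((=) a) (map ((!) w) [0..<length w]))"
    by (simp only: map_nth count_mset count_list_eq_length_filter)
  also have "\<dots> = length (positions a w)"
    unfolding positions_def length_filter_map comp_def by (metis (mono_tags))
  finally show ?thesis by simp
qed

lemma std_perm_letter_in_POI: "std_perm_letter w a \<in> POI (length w)"
  unfolding std_perm_letter_def
proof (rule map_of_zip_in_POI)
  show "length (positions a (sort w)) = length (positions a w)" by (simp add: length_positions)
qed (auto simp: positions_def intro: sorted_wrt_filter)

lemma pcomp_in_POI:
  assumes "f \<in> POI n" "g \<in> POI n"
  shows "pcomp f g \<in> POI n"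
proof (rule POI_I)
  have "dom (pcomp f g) \<subseteq> dom f"
    by (auto simp: pcomp_def map_comp_def split: option.splits)
  then show "dom (pcomp f g) \<subseteq> {..<n}"
    using assms(1) by (auto simp: POI_def)
  have "ran (pcomp f g) \<subseteq> ran g"
    by (auto simp: pcomp_def map_comp_def ran_def split: option.splits)
  then show "ran (pcomp f g) \<subseteq> {..<n}"
    using assms(2) by (auto simp: POI_def)
  fix i j assume "i \<in> dom (pcomp f g)" "j \<in> dom (pcomp f g)" "i < j"
  then obtain i' i'' j' j'' where ij: "f i = Some i'" "g i' = Some i''" "f j = Some j'" "g j' = Some j''"
    by (auto simp: pcomp_def map_comp_def dom_def split: option.splits)
  have "i' < j'" using assms(1) ij \<open>i < j\<close> unfolding POI_def by force
  then have "i'' < j''" using assms(2) ij unfolding POI_def by force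
  then show "the (pcomp f g i) < the (pcomp f g j)" using ij by (simp add: pcomp_def)
qed

lemma gen_subsemigroup_subset:
  assumes "X \<subseteq> S" "\<And>x y. x \<in> S \<Longrightarrow> y \<in> S \<Longrightarrow> m x y \<in> S"
  shows "gen_subsemigroup m X \<subseteq> S"
proof
  fix x assume "x \<in> gen_subsemigroup m X"
  then show "x \<in> S" by induction (use assms in auto)
qed

lemma SM_subset_POI: "SM us \<subseteq> POI (length (BW us))"
  unfolding SM_def
  by (rule gen_subsemigroup_subset) (auto intro: std_perm_letter_in_POI pcomp_in_POI)

section \<open>The action of words\<close>

fun word_pmap :: "('a::linorder) list \<Rightarrow> 'a list \<Rightarrow> (nat \<rightharpoonup> nat)" where
  "word_pmap w [] = Some"
| "word_pmap w (a # x) = pcomp (std_perm_letter w a) (word_pmap w x)"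

lemma pcomp_Some [simp]: "pcomp f Some = f" "pcomp Some f = f"
  by (auto simp: pcomp_def map_comp_def split: option.split)

lemma pcomp_assoc: "pcomp (pcomp f g) h = pcomp f (pcomp g h)"
  by (rule ext) (simp add: pcomp_def map_comp_def split: option.split)

lemma word_pmap_append: "word_pmap w (x @ y) = pcomp (word_pmap w x) (word_pmap w y)"
  by (induction x) (simp_all add: pcomp_assoc)

lemma pcomp_apply: "pcomp f g i = Option.bind (f i) g"
  by (simp add: pcomp_def map_comp_def split: option.split)

lemma SM_eq_image_word_pmap: "SM us = word_pmap (BW us) ` {x. x \<noteq> []}"
proof
  show "SM us \<subseteq> word_pmap (BW us) ` {x. x \<noteq> []}"
    unfolding SM_def
  proof (rule gen_subsemigroup_subset)
    show "range (std_perm_letter (BW us)) \<subseteq> word_pmap (BW us) ` {x. x \<noteq> []}"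
      by (auto intro!: image_eqI[where x = "[_]"])
  next
    fix f g assume "f \<in> word_pmap (BW us) ` {x. x \<noteq> []}" "g \<in> word_pmap (BW us) ` {x. x \<noteq> []}"
    then show "pcomp f g \<in> word_pmap (BW us) ` {x. x \<noteq> []}"
      by (auto simp flip: word_pmap_append)
  qed
next
  have "word_pmap (BW us) x \<in> SM us" if "x \<noteq> []" for x
    using that
  proof (induction x)
    case (Cons a x)
    have "std_perm_letter (BW us) a \<in> SM us"
      unfolding SM_def by (rule gen_subsemigroup.base) simp
    then show ?case
      using Cons by (cases "x = []") (auto simp: SM_def intro: gen_subsemigroup.step)
  qed simp
  then show "word_pmap (BW us) ` {x. x \<noteq> []} \<subseteq> SM us" by blast
qed

lemma sg_iso_images:
  assumes closed: "\<And>x y. x \<in> X \<Longrightarrow> y \<in> X \<Longrightarrow> m x y \<in> X"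
    and f_hom: "\<And>x y. x \<in> X \<Longrightarrow> y \<in> X \<Longrightarrow> f (m x y) = mf (f x) (f y)"
    and g_hom: "\<And>x y. x \<in> X \<Longrightarrow> y \<in> X \<Longrightarrow> g (m x y) = mg (g x) (g y)"
    and kernel: "\<And>x y. x \<in> X \<Longrightarrow> y \<in> X \<Longrightarrow> f x = f y \<longleftrightarrow> g x = g y"
  shows "sg_iso (f ` X) mf (g ` X) mg"
  unfolding sg_iso_def
proof (intro exI conjI ballI)
  define \<phi> where "\<phi> = g \<circ> inv_into X f"
  have \<phi>: "\<phi> (f x) = g x" if "x \<in> X" for x
    using that kernel[of "inv_into X f (f x)" x] by (simp add: \<phi>_def inv_into_into f_inv_into_f)
  have "inj_on \<phi> (f ` X)"
  proof (rule inj_onI)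
    fix s t assume "s \<in> f ` X" "t \<in> f ` X" "\<phi> s = \<phi> t"
    then obtain x y where "x \<in> X" "y \<in> X" "s = f x" "t = f y" "g x = g y"
      using \<phi> by auto
    then show "s = t" using kernel by simp
  qed
  moreover have "\<phi> ` f ` X = g ` X"
    unfolding image_image by (rule image_cong) (simp_all add: \<phi>)
  ultimately show "bij_betw \<phi> (f ` X) (g ` X)" by (simp add: bij_betw_def)
  fix s t assume "s \<in> f ` X" "t \<in> f ` X"
  then obtain x y where xy: "x \<in> X" "y \<in> X" "s = f x" "t = f y" by blast
  then have "\<phi> (mf s t) = \<phi> (f (m x y))" by (simp add: f_hom)
  also have "\<dots> = mg (g x) (g y)" using xy by (simp add: \<phi> closed g_hom)
  finally show "\<phi> (mf s t) = mg (\<phi> s) (\<phi> t)" using xy by (simp add: \<phi>)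
qed

section \<open>The LF-mapping of a table closed under rotation\<close>

lemma card_indices_eq_size_filter_mset:
  "card {k. k < length R \<and> P (R ! k)} = size (filter_mset P (mset R))"
  by (metis length_filter_conv_card mset_filter size_mset)

lemma length_filter_upt: "length (filter P [0..<N]) = card {i. i < N \<and> P i}"
proof -
  have "{i. i < length [0..<N] \<and> P ([0..<N] ! i)} = {i. i < N \<and> P i}" by auto
  then show ?thesis by (simp add: length_filter_conv_card)
qed

lemma ex_index_with_rank:
  fixes N :: nat
  shows "k < card {j. j < N \<and> P j} \<Longrightarrow> \<exists>j<N. P j \<and> card {j'. j' < j \<and> P j'} = k"
proof (induction N)
  case (Suc N)
  show ?case
  proof (cases "k < card {j. j < N \<and> P j}")
    case True then show ?thesis using Suc.IH by (meson less_SucI)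
  next
    case False
    have "{j. j < Suc N \<and> P j} = {j. j < N \<and> P j} \<union> (if P N then {N} else {})"
      by (auto simp: less_Suc_eq)
    then have "card {j. j < Suc N \<and> P j} = card {j. j < N \<and> P j} + (if P N then 1 else 0)"
      by (auto simp: card_Un_disjoint)
    then have "P N" "k = card {j. j < N \<and> P j}" using Suc.prems False
      by (auto split: if_splits)
    then show ?thesis by auto
  qed
qed simp

lemma nth_filter_upt_rank:
  assumes "P j" "j < N"
  shows "filter P [0..<N] ! card {j'. j' < j \<and> P j'} = j"
proof -
  have "[0..<N] = [0..<j] @ [j..<N]"
    using upt_add_eq_append[of 0 j "N - j"] assms(2) by simp
  also have "[j..<N] = j # [Suc j..<N]" using assms(2) by (simp add: upt_conv_Cons)
  finally have "[0..<N] = [0..<j] @ j # [Suc j..<N]" .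
  moreover have "length (filter P [0..<j]) = card {j'. j' < j \<and> P j'}"
    by (rule length_filter_upt)
  ultimately show ?thesis using assms(1) by (simp add: nth_append)
qed

lemma map_of_zip_filter_upt:
  assumes len: "length (filter P [0..<N]) = length (filter Q [0..<N])"
    and "P i" "i < N" "Q j" "j < N"
    and rank: "card {k. k < i \<and> P k} = card {k. k < j \<and> Q k}"
  shows "map_of (zip (filter P [0..<N]) (filter Q [0..<N])) i = Some j"
proof -
  let ?k = "card {k. k < i \<and> P k}"
  have "{k. k < i \<and> P k} \<subset> {k. k < N \<and> P k}" using assms by auto
  then have "?k < length (filter P [0..<N])"
    unfolding length_filter_upt by (simp add: psubset_card_mono)
  then show ?thesis
    using map_of_zip_nth[OF len _, of ?k] nth_filter_upt_rank[of P i N] nth_filter_upt_rank[of Q j N]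
      assms by simp
qed

lemma append_less_append_same_length:
  "length xs = length ys \<Longrightarrow> xs @ zs < ys @ zs \<longleftrightarrow> xs < (ys :: 'a::order list)"
proof (induction xs arbitrary: ys)
  case (Cons a xs)
  then show ?case by (cases ys) auto
qed simp

text \<open>The properties of the rows of \<open>T(M)\<close> on which the LF-mapping depends.\<close>

locale rotation_closed_rows =
  fixes R :: "('a::linorder) list list" and L :: nat
  assumes sorted_rows: "sorted R"
    and length_rows: "r \<in> set R \<Longrightarrow> length r = L"
    and L_pos: "0 < L"
    and mset_rotate1_rows: "mset (map rotate1 R) = mset R"
begin

text \<open>Rows may repeat (e.g. when a necklace occurs twice in \<open>M\<close>); the rank tells equal rows
  apart.\<close>

definition rank :: "nat \<Rightarrow> nat" where
  "rank i = card {k. k < i \<and> R ! k = R ! i}"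

lemma rows_nonempty: "r \<in> set R \<Longrightarrow> r \<noteq> []"
  using length_rows L_pos by fastforce

lemma last_rotate1_row: "r \<in> set R \<Longrightarrow> last (rotate1 r) = hd r"
  using rows_nonempty[of r] by (cases r) auto

lemma size_filter_rows_rotate1:
  "size (filter_mset P (mset R)) = size (filter_mset (\<lambda>r. P (rotate1 r)) (mset R))"
proof -
  have "filter_mset P (mset R) = filter_mset P (image_mset rotate1 (mset R))"
    using mset_rotate1_rows by simp
  then show ?thesis by (simp add: filter_mset_image_mset)
qed

lemma card_rows_eq_rotate1:
  "card {k. k < length R \<and> R ! k = rotate1 r} = card {k. k < length R \<and> R ! k = r}"
  using size_filter_rows_rotate1[of "\<lambda>t. t = rotate1 r"]
    card_indices_eq_size_filter_mset[of R "\<lambda>t. t = rotate1 r"]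
    card_indices_eq_size_filter_mset[of R "\<lambda>t. t = r"]
  by (simp add: inj_eq[OF inj_rotate1])

lemma rank_less_card: "i < length R \<Longrightarrow> rank i < card {k. k < length R \<and> R ! k = R ! i}"
  unfolding rank_def by (rule psubset_card_mono) auto

lemma rank_inj:
  assumes "j1 < length R" "j2 < length R" "R ! j1 = R ! j2" "rank j1 = rank j2"
  shows "j1 = j2"
proof -
  have less: "rank a < rank b" if "a < b" "R ! a = R ! b" for a b
    unfolding rank_def by (rule psubset_card_mono) (use that in auto)
  show ?thesis
    using assms less[of j1 j2] less[of j2 j1] by (cases j1 j2 rule: linorder_cases) auto
qed

lemma card_before_row:
  assumes i: "i < length R" and Q: "Q (R ! i)"
  shows "card {k. k < i \<and> Q (R ! k)} =
    card {k. k < length R \<and> R ! k < R ! i \<and> Q (R ! k)} + rank i"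
proof -
  have "{k. k < i \<and> Q (R ! k)} =
    {k. k < length R \<and> R ! k < R ! i \<and> Q (R ! k)} \<union> {k. k < i \<and> R ! k = R ! i}"
  proof (intro set_eqI iffI)
    fix k assume "k \<in> {k. k < i \<and> Q (R ! k)}"
    moreover from this have "R ! k \<le> R ! i" using sorted_nth_mono[OF sorted_rows, of k i] i by simp
    ultimately show "k \<in> {k. k < length R \<and> R ! k < R ! i \<and> Q (R ! k)} \<union> {k. k < i \<and> R ! k = R ! i}"
      using i by auto
  next
    fix k assume k: "k \<in> {k. k < length R \<and> R ! k < R ! i \<and> Q (R ! k)} \<union> {k. k < i \<and> R ! k = R ! i}"
    have "k < i" if "k < length R" "R ! k < R ! i"
    proof (rule ccontr)
      assume "\<not> k < i"
      then have "R ! i \<le> R ! k" using sorted_nth_mono[OF sorted_rows, of i k] that by simp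
      then show False using that by simp
    qed
    then show "k \<in> {k. k < i \<and> Q (R ! k)}" using k Q by auto
  qed
  moreover have "card ({k. k < length R \<and> R ! k < R ! i \<and> Q (R ! k)} \<union> {k. k < i \<and> R ! k = R ! i})
      = card {k. k < length R \<and> R ! k < R ! i \<and> Q (R ! k)} + card {k. k < i \<and> R ! k = R ! i}"
    by (rule card_Un_disjoint) auto
  ultimately show ?thesis unfolding rank_def by simp
qed

lemma count_rows_hd_less_eq_count_rows_last_less:
  assumes "a # s \<in> set R"
  shows "size (filter_mset (\<lambda>t. t < a # s \<and> hd t = a) (mset R)) =
         size (filter_mset (\<lambda>t. t < s @ [a] \<and> last t = a) (mset R))"
proof -
  have "filter_mset (\<lambda>t. rotate1 t < s @ [a] \<and> last (rotate1 t) = a) (mset R) =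
        filter_mset (\<lambda>t. t < a # s \<and> hd t = a) (mset R)"
  proof (rule filter_mset_cong0)
    fix t assume "t \<in># mset R"
    then have "t \<in> set R" by simp
    then obtain b s' where t: "t = b # s'" using rows_nonempty by (meson neq_Nil_conv)
    have "length s' = length s" using length_rows[OF \<open>t \<in> set R\<close>] length_rows[OF assms] t by simp
    with t show "(rotate1 t < s @ [a] \<and> last (rotate1 t) = a) = (t < a # s \<and> hd t = a)"
      using append_less_append_same_length[of s' s "[a]"] by auto
  qed
  then show ?thesis using size_filter_rows_rotate1[of "\<lambda>t. t < s @ [a] \<and> last t = a"] by simp
qed

lemma card_rows_hd_eq_card_rows_last:
  "card {i. i < length R \<and> hd (R ! i) = a} = card {i. i < length R \<and> last (R ! i) = a}"
proof -
  have "filter_mset (\<lambda>t. hd t = a) (mset R) = filter_mset (\<lambda>t. last (rotate1 t) = a) (mset R)"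
    by (rule filter_mset_cong0) (simp add: last_rotate1_row)
  then show ?thesis
    using size_filter_rows_rotate1[of "\<lambda>t. last t = a"]
      card_indices_eq_size_filter_mset[of R "\<lambda>t. hd t = a"]
      card_indices_eq_size_filter_mset[of R "\<lambda>t. last t = a"] by simp
qed

lemma sort_map_last_rows: "sort (map last R) = map hd R"
proof (rule properties_for_sort)
  have "image_mset hd (mset R) = image_mset (\<lambda>t. last (rotate1 t)) (mset R)"
    by (rule image_mset_cong) (simp add: last_rotate1_row)
  also have "\<dots> = image_mset last (mset (map rotate1 R))"
    by (simp add: image_mset.compositionality comp_def)
  also have "\<dots> = image_mset last (mset R)"
    by (simp only: mset_rotate1_rows)
  finally show "mset (map hd R) = mset (map last R)" by simp
  show "sorted (map hd R)"
    unfolding sorted_iff_nth_mono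
  proof (intro allI impI)
    fix i j assume ij: "i \<le> j" "j < length (map hd R)"
    then have "R ! i \<le> R ! j" using sorted_nth_mono[OF sorted_rows] by simp
    moreover have "R ! i \<noteq> []" "R ! j \<noteq> []" using rows_nonempty ij by auto
    ultimately show "map hd R ! i \<le> map hd R ! j"
      using ij by (auto simp: neq_Nil_conv)
  qed
qed

lemma std_perm_letter_rows:
  "std_perm_letter (map last R) a =
     map_of (zip (filter (\<lambda>i. hd (R ! i) = a) [0..<length R])
                 (filter (\<lambda>i. last (R ! i) = a) [0..<length R]))"
proof -
  have "filter (\<lambda>i. map f R ! i = a) [0..<length R] = filter (\<lambda>i. f (R ! i) = a) [0..<length R]"
    for f :: "'a list \<Rightarrow> 'a"
    by (rule filter_cong) auto
  then show ?thesis unfolding std_perm_letter_def positions_def sort_map_last_rows by simp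
qed

lemma ex_rotate1_row_same_rank:
  assumes "i < length R"
  shows "\<exists>j<length R. R ! j = rotate1 (R ! i) \<and> rank j = rank i"
proof -
  have "rank i < card {k. k < length R \<and> R ! k = rotate1 (R ! i)}"
    using rank_less_card[OF assms] card_rows_eq_rotate1 by simp
  then show ?thesis
    using ex_index_with_rank[of "rank i" "length R" "\<lambda>k. R ! k = rotate1 (R ! i)"]
    unfolding rank_def by auto
qed

lemma card_hd_before_eq_card_last_before:
  assumes i: "i < length R" "R ! i = a # s" and j: "j < length R" "R ! j = s @ [a]"
    and rank: "rank j = rank i"
  shows "card {k. k < i \<and> hd (R ! k) = a} = card {k. k < j \<and> last (R ! k) = a}"
proof -
  have "card {k. k < i \<and> hd (R ! k) = a} =
      size (filter_mset (\<lambda>t. t < a # s \<and> hd t = a) (mset R)) + rank i"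
    using card_before_row[OF i(1), of "\<lambda>t. hd t = a"] i(2)
      card_indices_eq_size_filter_mset[of R "\<lambda>t. t < a # s \<and> hd t = a"] by simp
  also have "\<dots> = size (filter_mset (\<lambda>t. t < s @ [a] \<and> last t = a) (mset R)) + rank j"
    using count_rows_hd_less_eq_count_rows_last_less[OF nth_mem[OF i(1), unfolded i(2)]] rank
    by simp
  also have "\<dots> = card {k. k < j \<and> last (R ! k) = a}"
    using card_before_row[OF j(1), of "\<lambda>t. last t = a"] j(2)
      card_indices_eq_size_filter_mset[of R "\<lambda>t. t < s @ [a] \<and> last t = a"] by simp
  finally show ?thesis .
qed

lemma std_perm_letter_row_Some:
  assumes i: "i < length R" and a: "hd (R ! i) = a"
  shows "\<exists>j. std_perm_letter (map last R) a i = Some j \<and> j < length R \<and>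
             R ! j = rotate1 (R ! i) \<and> rank j = rank i"
proof -
  obtain s where s: "R ! i = a # s"
    using rows_nonempty[OF nth_mem[OF i]] a by (cases "R ! i") auto
  obtain j where j: "j < length R" "R ! j = rotate1 (R ! i)" "rank j = rank i"
    using ex_rotate1_row_same_rank[OF i] by blast
  have "std_perm_letter (map last R) a i = Some j"
    unfolding std_perm_letter_rows
  proof (rule map_of_zip_filter_upt)
    show "length (filter (\<lambda>i. hd (R ! i) = a) [0..<length R]) =
      length (filter (\<lambda>i. last (R ! i) = a) [0..<length R])"
      unfolding length_filter_upt by (rule card_rows_hd_eq_card_rows_last)
    show "card {k. k < i \<and> hd (R ! k) = a} = card {k. k < j \<and> last (R ! k) = a}"
      using card_hd_before_eq_card_last_before[OF i s] j s by simp
  qed (use i a j s in simp_all)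
  then show ?thesis using j by blast
qed

lemma std_perm_letter_row_None:
  "\<not> (i < length R \<and> hd (R ! i) = a) \<Longrightarrow> std_perm_letter (map last R) a i = None"
  unfolding std_perm_letter_rows
  using card_rows_hd_eq_card_rows_last[of a] by (auto simp: length_filter_upt)

lemma word_pmap_row_Some:
  assumes "i < length R" "cyclic_factor_at (R ! i) 0 x"
  shows "\<exists>j. word_pmap (map last R) x i = Some j \<and> j < length R \<and>
             R ! j = rotate (length x) (R ! i) \<and> rank j = rank i"
  using assms
proof (induction x arbitrary: i)
  case (Cons a x)
  have "R ! i \<noteq> []" using Cons.prems rows_nonempty by simp
  then have a: "hd (R ! i) = a" and x: "cyclic_factor_at (rotate1 (R ! i)) 0 x"
    using Cons.prems(2) by (simp_all add: cyclic_factor_at_Cons cyclic_factor_at_rotate1 hd_conv_nth)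
  obtain k where k: "std_perm_letter (map last R) a i = Some k" "k < length R"
      "R ! k = rotate1 (R ! i)" "rank k = rank i"
    using std_perm_letter_row_Some[OF Cons.prems(1) a] by blast
  obtain j where "word_pmap (map last R) x k = Some j" "j < length R"
      "R ! j = rotate (length x) (R ! k)" "rank j = rank k"
    using Cons.IH[OF k(2)] k(3) x by auto
  then show ?case using k by (auto simp: pcomp_apply rotate1_rotate_swap)
qed simp

lemma word_pmap_row_None:
  assumes "i < length R" "\<not> cyclic_factor_at (R ! i) 0 x"
  shows "word_pmap (map last R) x i = None"
  using assms
proof (induction x arbitrary: i)
  case (Cons a x)
  show ?case
  proof (cases "hd (R ! i) = a")
    case True
    have "R ! i \<noteq> []" using Cons.prems rows_nonempty by simp
    then have x: "\<not> cyclic_factor_at (rotate1 (R ! i)) 0 x"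
      using Cons.prems(2) True by (simp add: cyclic_factor_at_Cons cyclic_factor_at_rotate1 hd_conv_nth)
    obtain k where k: "std_perm_letter (map last R) a i = Some k" "k < length R"
        "R ! k = rotate1 (R ! i)"
      using std_perm_letter_row_Some[OF Cons.prems(1) True] by blast
    then show ?thesis using Cons.IH[OF k(2)] x by (simp add: pcomp_apply)
  qed (simp add: pcomp_apply std_perm_letter_row_None)
qed simp

lemma word_pmap_outside_rows:
  "x \<noteq> [] \<Longrightarrow> \<not> i < length R \<Longrightarrow> word_pmap (map last R) x i = None"
  by (cases x) (simp_all add: pcomp_apply std_perm_letter_row_None)

lemma word_pmap_row_eq:
  assumes i: "i < length R"
    and read: "cyclic_factor_at (R ! i) 0 x \<longleftrightarrow> cyclic_factor_at (R ! i) 0 y"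
    and rot: "cyclic_factor_at (R ! i) 0 x \<longrightarrow> rotate (length x) (R ! i) = rotate (length y) (R ! i)"
  shows "word_pmap (map last R) x i = word_pmap (map last R) y i"
proof (cases "cyclic_factor_at (R ! i) 0 x")
  case True
  then obtain j j' where "word_pmap (map last R) x i = Some j" "j < length R"
      "R ! j = rotate (length x) (R ! i)" "rank j = rank i"
      "word_pmap (map last R) y i = Some j'" "j' < length R"
      "R ! j' = rotate (length y) (R ! i)" "rank j' = rank i"
    using word_pmap_row_Some[OF i, of x] word_pmap_row_Some[OF i, of y] read by blast
  then show ?thesis using rank_inj[of j j'] rot True by simp
next
  case False
  then show ?thesis using word_pmap_row_None[OF i] read by simp
qed

lemma word_pmap_rows_eq_iff:
  assumes x: "x \<noteq> []" and y: "y \<noteq> []"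
  shows "word_pmap (map last R) x = word_pmap (map last R) y \<longleftrightarrow>
    (\<forall>r\<in>set R. (cyclic_factor_at r 0 x \<longleftrightarrow> cyclic_factor_at r 0 y) \<and>
       (cyclic_factor_at r 0 x \<longrightarrow> rotate (length x) r = rotate (length y) r))"
  (is "_ \<longleftrightarrow> (\<forall>r\<in>set R. ?same r)")
proof
  assume eq: "word_pmap (map last R) x = word_pmap (map last R) y"
  have "?same (R ! i)" if i: "i < length R" for i
  proof -
    have "word_pmap (map last R) z i \<noteq> None \<longleftrightarrow> cyclic_factor_at (R ! i) 0 z" for z
      using word_pmap_row_Some[OF i, of z] word_pmap_row_None[OF i, of z]
      by (cases "cyclic_factor_at (R ! i) 0 z") auto
    then show ?thesis
      using eq word_pmap_row_Some[OF i, of x] word_pmap_row_Some[OF i, of y] by force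
  qed
  then show "\<forall>r\<in>set R. ?same r" by (simp add: all_set_conv_all_nth)
next
  assume "\<forall>r\<in>set R. ?same r"
  then have "word_pmap (map last R) x i = word_pmap (map last R) y i" for i
    using word_pmap_row_eq[of i x y] word_pmap_outside_rows[OF x] word_pmap_outside_rows[OF y]
    by (cases "i < length R") auto
  then show "word_pmap (map last R) x = word_pmap (map last R) y" ..
qed

end

section \<open>Necklaces and the Burrows--Wheeler table\<close>

lemma necklace_eq_rotations:
  assumes "u \<noteq> []"
  shows "necklace u = (\<lambda>k. rotate k u) ` {..<length u}"
proof
  show "necklace u \<subseteq> (\<lambda>k. rotate k u) ` {..<length u}"
  proof
    fix v assume "v \<in> necklace u"
    then obtain x y where "u = x @ y" "v = y @ x" by (auto simp: necklace_def)
    then have "v = rotate (length x mod length u) u" by (metis rotate_append rotate_conv_mod)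
    then show "v \<in> (\<lambda>k. rotate k u) ` {..<length u}" using assms by auto
  qed
  show "(\<lambda>k. rotate k u) ` {..<length u} \<subseteq> necklace u"
  proof
    fix v assume "v \<in> (\<lambda>k. rotate k u) ` {..<length u}"
    then obtain k where "k < length u" "v = drop k u @ take k u"
      by (auto simp: rotate_drop_take)
    moreover have "u = take k u @ drop k u" by simp
    ultimately show "v \<in> necklace u" unfolding necklace_def by blast
  qed
qed

lemma finite_necklace: "finite (necklace u)"
proof (rule finite_subset)
  show "necklace u \<subseteq> (\<lambda>k. rotate k u) ` {..length u}"
  proof
    fix v assume "v \<in> necklace u"
    then obtain x y where "u = x @ y" "v = rotate (length x) u"
      by (auto simp: necklace_def rotate_append)
    then show "v \<in> (\<lambda>k. rotate k u) ` {..length u}" by auto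
  qed
qed simp

lemma card_necklace_primitive: "primitive u \<Longrightarrow> card (necklace u) = length u"
  using primitive_rotate_eq_iff[of u]
  by (simp add: necklace_eq_rotations primitive_nonempty card_image inj_on_def)

lemma rotate1_image_necklace:
  assumes "u \<noteq> []"
  shows "rotate1 ` necklace u = necklace u"
proof (rule card_subset_eq[OF finite_necklace])
  show "rotate1 ` necklace u \<subseteq> necklace u"
  proof
    fix v assume "v \<in> rotate1 ` necklace u"
    then obtain k where "v = rotate (Suc k) u"
      using necklace_eq_rotations[OF assms] by auto
    then have "v = rotate (Suc k mod length u) u" by (metis rotate_conv_mod)
    then show "v \<in> necklace u" using necklace_eq_rotations[OF assms] assms by auto
  qed
  show "card (rotate1 ` necklace u) = card (necklace u)"
    by (rule card_image) (meson inj_rotate1 inj_on_subset subset_UNIV)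
qed

lemma set_necklace_words [simp]: "set (necklace_words u) = necklace u"
  by (simp add: necklace_words_def finite_necklace)

lemma mset_necklace_words: "mset (necklace_words u) = mset_set (necklace u)"
  by (metis mset_set_set distinct_sorted_list_of_set necklace_words_def set_necklace_words)

definition bw_width :: "'a list list \<Rightarrow> nat" where
  "bw_width us = Lcm (set (map length us))"

lemma bw_table_eq:
  "bw_table us = sort (concat (map (\<lambda>u. map (\<lambda>v. word_pow v (bw_width us div length v))
      (necklace_words u)) us))"
  by (simp add: bw_table_def bw_width_def Let_def)

lemma bw_width_pos: "\<forall>u\<in>set us. u \<noteq> [] \<Longrightarrow> 0 < bw_width us"
  unfolding bw_width_def neq0_conv[symmetric] by (auto simp: Lcm_0_iff_nat)

lemma length_dvd_bw_width: "u \<in> set us \<Longrightarrow> length u dvd bw_width us"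
  by (simp add: bw_width_def dvd_Lcm)

lemma mset_map_rotate1_concat:
  assumes "\<And>u. u \<in> set us \<Longrightarrow> mset (map rotate1 (F u)) = mset (F u)"
  shows "mset (map rotate1 (concat (map F us))) = mset (concat (map F us))"
  using assms by (induction us) auto

context
  fixes us :: "('a::linorder) list list"
  assumes primitive: "\<forall>u\<in>set us. primitive u"
begin

lemma set_bw_table: "set (bw_table us) =
   (\<Union>u\<in>set us. (\<lambda>c. word_pow (rotate c u) (bw_width us div length u)) ` {..<length u})"
  using primitive
  by (auto simp: bw_table_eq necklace_eq_rotations primitive_nonempty image_image cong: SUP_cong)

lemma length_bw_table: "length (bw_table us) = sum_list (map length us)"
  using primitive
  by (simp add: bw_table_eq length_concat comp_def necklace_words_def card_necklace_primitive
      cong: map_cong)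

lemma rotation_closed_rows_bw_table: "rotation_closed_rows (bw_table us) (bw_width us)"
proof
  show "sorted (bw_table us)" by (simp add: bw_table_eq)
  show "0 < bw_width us" using primitive primitive_nonempty bw_width_pos by blast
  fix r assume "r \<in> set (bw_table us)"
  then show "length r = bw_width us"
    unfolding set_bw_table by (auto simp: dvd_div_mult_self length_dvd_bw_width)
next
  define g where "g = (\<lambda>v::'a list. word_pow v (bw_width us div length v))"
  have "mset (map rotate1 (map g (necklace_words u))) = mset (map g (necklace_words u))"
    if "u \<in> set us" for u
  proof -
    have "mset (map rotate1 (map g (necklace_words u))) =
        image_mset (g \<circ> rotate1) (mset_set (necklace u))"
      by (auto simp: mset_necklace_words g_def rotate1_word_pow intro: image_mset_cong)
    also have "\<dots> = image_mset g (mset_set (rotate1 ` necklace u))"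
      by (simp add: image_mset.compositionality
          flip: image_mset_mset_set[OF inj_on_subset[OF inj_rotate1 subset_UNIV]])
    finally show ?thesis
      using that primitive by (simp add: rotate1_image_necklace primitive_nonempty mset_necklace_words)
  qed
  then have "mset (map rotate1 (concat (map (\<lambda>u. map g (necklace_words u)) us))) =
      mset (concat (map (\<lambda>u. map g (necklace_words u)) us))"
    by (rule mset_map_rotate1_concat)
  then show "mset (map rotate1 (bw_table us)) = mset (bw_table us)"
    unfolding bw_table_eq g_def[symmetric] by simp
qed

lemma bw_width_div_length_ge_1:
  assumes "u \<in> set us"
  shows "1 \<le> bw_width us div length u"
proof -
  obtain q where q: "bw_width us = length u * q" using length_dvd_bw_width[OF assms] by blast
  moreover have "0 < bw_width us" using primitive primitive_nonempty bw_width_pos by blast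
  ultimately show ?thesis by (cases q) auto
qed

lemma cyclic_factor_at_bw_row:
  assumes "u \<in> set us"
  shows "cyclic_factor_at (word_pow (rotate c u) (bw_width us div length u)) 0 x =
    cyclic_factor_at u c x"
proof -
  have "u \<noteq> []" using assms primitive primitive_nonempty by blast
  then show ?thesis
    using bw_width_div_length_ge_1[OF assms]
    by (simp add: cyclic_factor_at_word_pow cyclic_factor_at_rotate)
qed

lemma rotate_bw_row_eq_iff:
  assumes "u \<in> set us"
  shows "rotate a (word_pow (rotate c u) (bw_width us div length u)) =
         rotate b (word_pow (rotate c u) (bw_width us div length u)) \<longleftrightarrow>
         a mod length u = b mod length u"
proof -
  let ?k = "bw_width us div length u"
  have p: "primitive u" using assms primitive by blast
  have "rotate a (word_pow (rotate c u) ?k) = rotate b (word_pow (rotate c u) ?k) \<longleftrightarrow>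
      word_pow (rotate (a + c) u) ?k = word_pow (rotate (b + c) u) ?k"
    by (simp add: rotate_word_pow rotate_rotate)
  also have "\<dots> \<longleftrightarrow> rotate (a + c) u = rotate (b + c) u"
    using word_pow_eq_imp_eq[OF bw_width_div_length_ge_1[OF assms],
        of "rotate (a + c) u" "rotate (b + c) u"] by auto
  also have "\<dots> \<longleftrightarrow> [a + c = b + c] (mod length u)"
    by (simp add: primitive_rotate_eq_iff[OF p] cong_def)
  finally show ?thesis
    using cong_add_rcancel_nat[of a c b "length u"] unfolding cong_def by simp
qed

lemma word_pmap_BW_eq_iff:
  assumes "x \<noteq> []" "y \<noteq> []"
  shows "word_pmap (BW us) x = word_pmap (BW us) y \<longleftrightarrow> (\<forall>u\<in>set us. (x, y) \<in> synt_cong u)"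
proof -
  interpret rotation_closed_rows "bw_table us" "bw_width us"
    by (rule rotation_closed_rows_bw_table)
  have "word_pmap (BW us) x = word_pmap (BW us) y \<longleftrightarrow>
      (\<forall>u\<in>set us. \<forall>c\<in>{..<length u}. (cyclic_factor_at u c x \<longleftrightarrow> cyclic_factor_at u c y) \<and>
          (cyclic_factor_at u c x \<longrightarrow> length x mod length u = length y mod length u))"
    unfolding BW_def word_pmap_rows_eq_iff[OF assms] set_bw_table
    by (simp add: cyclic_factor_at_bw_row rotate_bw_row_eq_iff)
  also have "\<dots> \<longleftrightarrow> (\<forall>u\<in>set us. \<forall>c. (cyclic_factor_at u c x \<longleftrightarrow> cyclic_factor_at u c y) \<and>
          (cyclic_factor_at u c x \<longrightarrow> length x mod length u = length y mod length u))"
  proof (intro ball_cong[OF refl] iffI allI ballI)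
    fix u c assume u: "u \<in> set us"
      and all: "\<forall>c\<in>{..<length u}. (cyclic_factor_at u c x \<longleftrightarrow> cyclic_factor_at u c y) \<and>
          (cyclic_factor_at u c x \<longrightarrow> length x mod length u = length y mod length u)"
    have "length u > 0" using u primitive primitive_nonempty by blast
    then show "(cyclic_factor_at u c x \<longleftrightarrow> cyclic_factor_at u c y) \<and>
        (cyclic_factor_at u c x \<longrightarrow> length x mod length u = length y mod length u)"
      using all[rule_format, of "c mod length u"] by (simp add: cyclic_factor_at_mod)
  qed simp
  also have "\<dots> \<longleftrightarrow> (\<forall>u\<in>set us. (x, y) \<in> synt_cong u)"
  proof (rule ball_cong[OF refl])
    fix u assume "u \<in> set us"
    then have "u \<noteq> []" using primitive primitive_nonempty by blast
    then show "(\<forall>c. (cyclic_factor_at u c x \<longleftrightarrow> cyclic_factor_at u c y) \<and>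
          (cyclic_factor_at u c x \<longrightarrow> length x mod length u = length y mod length u)) \<longleftrightarrow>
        (x, y) \<in> synt_cong u"
      using synt_cong_iff[OF _ assms] by (simp add: all_conj_distrib)
  qed
  finally show ?thesis .
qed

end

theorem theorem2p6:
  fixes us :: "('a::{linorder,finite}) list list"
  assumes "\<forall>u\<in>set us. primitive u"
  shows "SM us \<subseteq> POI (sum_list (map length us)) \<and>
         (\<exists>T. subdirect_product us T \<and> sg_iso (SM us) pcomp T (prod_mult us))"
proof
  show "SM us \<subseteq> POI (sum_list (map length us))"
    using SM_subset_POI[of us] length_bw_table[OF assms] by (simp add: BW_def)
  have "sg_iso (SM us) pcomp (synt_classes us ` {x. x \<noteq> []}) (prod_mult us)"
    unfolding SM_eq_image_word_pmap
  proof (rule sg_iso_images)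
    fix x y :: "'a list" assume "x \<in> {x. x \<noteq> []}" "y \<in> {x. x \<noteq> []}"
    then show "x @ y \<in> {x. x \<noteq> []}"
      and "word_pmap (BW us) (x @ y) = pcomp (word_pmap (BW us) x) (word_pmap (BW us) y)"
      and "synt_classes us (x @ y) = prod_mult us (synt_classes us x) (synt_classes us y)"
      and "word_pmap (BW us) x = word_pmap (BW us) y \<longleftrightarrow> synt_classes us x = synt_classes us y"
      by (simp_all add: word_pmap_append prod_mult_synt_classes word_pmap_BW_eq_iff[OF assms]
          synt_classes_eq_iff)
  qed
  then show "\<exists>T. subdirect_product us T \<and> sg_iso (SM us) pcomp T (prod_mult us)"
    using subdirect_product_synt_classes by blast
qed

end
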